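(* Let $\Omega\subset\mathbb{R}^n$ be open, $\omega$ a weight, $1\le p<q<\infty$, $a\in L^\infty(\Omega)$ non-negative, and $\varphi(x,t)=t^p+a(x)t^q$. Then $\varphi$ satisfies (A1)$_\omega$ if and only if there is a constant $C$ such that \[a(x)\le C\big(a(y)+\omega(B)^{\frac{q-p}{p}}\big)\] for every open ball $B$ and every $x,y\in B\cap\Omega$.
   Context: A weight is a nonnegative locally integrable function $\omega$ on $\mathbb{R}^n$, $\omega(E):=\int_E\omega\,dx$. (A1)$_\omega$: there is $\beta_1\in(0,1]$ such that $\varphi(x,\beta_1t)\le\varphi(y,t)$ for every open ball $B$ with $\omega(B)\le1$, a.e. $x,y\in B\cap\Omega$, and every $t\ge0$ with $\varphi(y,t)\in[1,1/\omega(B)]$. *)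

theory Defs
  imports "HOL-Analysis.Analysis"
begin

definition is_weight :: "('a::euclidean_space \<Rightarrow> real) \<Rightarrow> bool" where
  "is_weight w \<longleftrightarrow> (\<forall>x. 0 \<le> w x) \<and>
     (\<forall>K. compact K \<longrightarrow> set_integrable lebesgue K w)"

definition wmeas :: "('a::euclidean_space \<Rightarrow> real) \<Rightarrow> 'a set \<Rightarrow> real" where
  "wmeas w E = (LINT x:E|lebesgue. w x)"

text \<open>The bound \<open>\<phi>(y,t) \<le> 1/\<omega>(B)\<close> is written as
  \<open>\<phi>(y,t) \<omega>(B) \<le> 1\<close>, so that \<open>\<omega>(B) = 0\<close> corresponds to \<open>1/\<omega>(B) = \<infinity>\<close>.\<close>
definition A1_weight ::
  "('a::euclidean_space \<Rightarrow> real) \<Rightarrow> 'a set \<Rightarrow> ('a \<Rightarrow> real \<Rightarrow> real) \<Rightarrow> bool" where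
  "A1_weight w \<Omega> \<phi> \<longleftrightarrow>
     (\<exists>\<beta>1. 0 < \<beta>1 \<and> \<beta>1 \<le> 1 \<and>
       (\<forall>c r. wmeas w (ball c r) \<le> 1 \<longrightarrow>
          (AE x in lebesgue. AE y in lebesgue.
             x \<in> ball c r \<inter> \<Omega> \<longrightarrow> y \<in> ball c r \<inter> \<Omega> \<longrightarrow>
             (\<forall>t\<ge>0. 1 \<le> \<phi> y t \<and> \<phi> y t * wmeas w (ball c r) \<le> 1 \<longrightarrow>
                       \<phi> x (\<beta>1 * t) \<le> \<phi> y t))))"

definition double_phase :: "real \<Rightarrow> real \<Rightarrow> ('a \<Rightarrow> real) \<Rightarrow> 'a \<Rightarrow> real \<Rightarrow> real" where
  "double_phase p q a x t = t powr p + a x * t powr q"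

end

theory Submission
  imports Defs
begin

text \<open>Let \<open>e = (q - p)/p\<close> and \<open>\<omega> = \<omega>(B)\<close>. If \<open>\<phi>(y,t) \<omega> \<le> 1\<close> then \<open>\<omega> t^p \<le> 1\<close>, i.e.
  \<open>\<omega>^e t^q \<le> t^p\<close>; so \<open>a(x) \<le> C (a(y) + \<omega>^e)\<close> gives \<open>a(x) t^q \<le> C \<phi>(y,t)\<close>, and
  \<open>\<beta> = 1/(2(C+1))\<close> works in (A1)\<open>_\<omega>\<close>.
  Conversely, (A1)\<open>_\<omega>\<close> yields \<open>\<beta>^q a(x) t^q \<le> t^p + a(y) t^q\<close>, i.e.
  \<open>\<beta>^q a(x) \<le> a(y) + t^(p-q)\<close>, for every admissible \<open>t\<close>; it remains to make \<open>t\<close> large.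
  For \<open>\<omega> \<le> 1/2\<close> take the smaller of the solutions of \<open>t^p = 1/(2\<omega>)\<close> and
  \<open>a(y) t^q = 1/(2\<omega>)\<close>: the first gives \<open>t^(p-q) = (2\<omega>)^e\<close>, the second \<open>t^(p-q) \<le> a(y)\<close>.
  For \<open>\<omega> = 0\<close> every \<open>t \<ge> 1\<close> is admissible, and for \<open>\<omega> > 1/2\<close> the boundedness of \<open>a\<close>
  suffices.\<close>

definition A1_at :: "real \<Rightarrow> real \<Rightarrow> real \<Rightarrow> real \<Rightarrow> real \<Rightarrow> real \<Rightarrow> bool" where
  "A1_at p q \<beta> ax ay om \<longleftrightarrow>
     (\<forall>t\<ge>0. 1 \<le> t powr p + ay * t powr q \<and> (t powr p + ay * t powr q) * om \<le> 1 \<longrightarrow>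
        (\<beta> * t) powr p + ax * (\<beta> * t) powr q \<le> t powr p + ay * t powr q)"

lemma A1_weight_double_phase_iff:
  "A1_weight w \<Omega> (double_phase p q a) \<longleftrightarrow>
     (\<exists>\<beta>. 0 < \<beta> \<and> \<beta> \<le> 1 \<and>
       (\<forall>c r. wmeas w (ball c r) \<le> 1 \<longrightarrow>
          (AE x in lebesgue. AE y in lebesgue.
             x \<in> ball c r \<inter> \<Omega> \<longrightarrow> y \<in> ball c r \<inter> \<Omega> \<longrightarrow>
             A1_at p q \<beta> (a x) (a y) (wmeas w (ball c r)))))"
  unfolding A1_weight_def A1_at_def double_phase_def ..

lemma wmeas_nonneg: "is_weight w \<Longrightarrow> 0 \<le> wmeas w E"
  unfolding is_weight_def wmeas_def set_lebesgue_integral_def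
  by (intro integral_nonneg_AE) (auto simp: indicator_def)

lemma AE_AE_mono:
  assumes "AE x in M. AE y in N. P x y"
    and "AE x in M. R x" and "AE y in N. S y"
    and "\<And>x y. P x y \<Longrightarrow> R x \<Longrightarrow> S y \<Longrightarrow> Q x y"
  shows "AE x in M. AE y in N. Q x y"
  using assms(1,2)
proof eventually_elim
  case (elim x)
  from elim(1) assms(3) show ?case
    by eventually_elim (use elim(2) assms(4) in blast)
qed

lemma powr_weight_le:
  fixes om t p q :: real
  assumes "0 < p" "p \<le> q" "0 \<le> om" "0 \<le> t" "om * t powr p \<le> 1"
  shows "om powr ((q - p) / p) * t powr q \<le> t powr p"
proof -
  have "om powr ((q - p) / p) * t powr q = (om * t powr p) powr ((q - p) / p) * t powr p"
    using assms(1-4) by (simp add: powr_mult powr_powr powr_add[symmetric])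
  also have "\<dots> \<le> 1 * t powr p"
    using assms by (intro mult_right_mono powr_le1) auto
  finally show ?thesis by simp
qed

lemma A1_at_if_bound:
  fixes p q C ax ay om :: real
  assumes p: "1 \<le> p" "p < q" and nonneg: "0 \<le> C" "0 \<le> ax" "0 \<le> ay" "0 \<le> om"
    and bound: "ax \<le> C * (ay + om powr ((q - p) / p))"
  shows "A1_at p q (1 / (2 * (C + 1))) ax ay om"
  unfolding A1_at_def
proof (intro allI impI)
  fix t :: real
  define \<beta> where "\<beta> = 1 / (2 * (C + 1))"
  assume "0 \<le> t" and "1 \<le> t powr p + ay * t powr q \<and> (t powr p + ay * t powr q) * om \<le> 1"
  then have "om * t powr p \<le> 1"
    using nonneg by (smt (verit) mult_nonneg_nonneg powr_ge_zero distrib_right mult.commute)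
  then have small: "om powr ((q - p) / p) * t powr q \<le> t powr p"
    using p nonneg \<open>0 \<le> t\<close> by (intro powr_weight_le) auto
  have \<beta>: "0 < \<beta>" "\<beta> \<le> 1" "\<beta> + C * \<beta> \<le> 1 / 2"
    using nonneg by (auto simp: \<beta>_def field_simps)
  have "(\<beta> * t) powr p \<le> \<beta> * t powr p"
    using \<beta> p \<open>0 \<le> t\<close> by (simp add: powr_mult mult_right_mono powr_le_one_le)
  moreover have "ax * (\<beta> * t) powr q \<le> \<beta> * (ax * t powr q)"
  proof -
    have "ax * (\<beta> * t) powr q = \<beta> powr q * (ax * t powr q)"
      using \<beta> \<open>0 \<le> t\<close> by (simp add: powr_mult)
    also have "\<dots> \<le> \<beta> * (ax * t powr q)"
      using \<beta> p nonneg by (intro mult_right_mono powr_le_one_le) auto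
    finally show ?thesis .
  qed
  ultimately have "(\<beta> * t) powr p + ax * (\<beta> * t) powr q \<le> \<beta> * t powr p + \<beta> * (ax * t powr q)"
    by (rule add_mono)
  also have "\<dots> \<le> \<beta> * t powr p + \<beta> * (C * (ay * t powr q + t powr p))"
  proof -
    have "ax * t powr q \<le> C * (ay + om powr ((q - p) / p)) * t powr q"
      using bound by (simp add: mult_right_mono)
    also have "\<dots> = C * (ay * t powr q + om powr ((q - p) / p) * t powr q)"
      by (simp add: algebra_simps)
    also have "\<dots> \<le> C * (ay * t powr q + t powr p)"
      using small nonneg by (intro mult_left_mono) auto
    finally show ?thesis using \<beta>(1) by simp
  qed
  also have "\<dots> = (\<beta> + C * \<beta>) * t powr p + C * \<beta> * (ay * t powr q)"
    by (simp add: algebra_simps)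
  also have "\<dots> \<le> t powr p + ay * t powr q"
    using \<beta> nonneg by (intro add_mono mult_left_le_one_le) auto
  finally show "(1 / (2 * (C + 1)) * t) powr p + ax * (1 / (2 * (C + 1)) * t) powr q
      \<le> t powr p + ay * t powr q" by (simp add: \<beta>_def)
qed

lemma A1_at_admissible_bound:
  fixes p q \<beta> ax ay om t :: real
  assumes A1: "A1_at p q \<beta> ax ay om" and "0 < \<beta>" "0 < t"
    and "1 \<le> t powr p + ay * t powr q" "(t powr p + ay * t powr q) * om \<le> 1"
  shows "\<beta> powr q * ax \<le> ay + t powr (p - q)"
proof -
  have "\<beta> powr q * ax * t powr q = ax * (\<beta> * t) powr q"
    using assms(2,3) by (simp add: powr_mult)
  also have "\<dots> \<le> (\<beta> * t) powr p + ax * (\<beta> * t) powr q"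
    by simp
  also have "\<dots> \<le> t powr p + ay * t powr q"
    using A1 assms(3-5) unfolding A1_at_def by simp
  finally have "\<beta> powr q * ax \<le> (t powr p + ay * t powr q) / t powr q"
    using \<open>0 < t\<close> by (simp add: pos_le_divide_eq)
  then show ?thesis
    using \<open>0 < t\<close> by (simp add: add_divide_distrib powr_diff add.commute)
qed

lemma A1_at_zero_weight_bound:
  fixes p q \<beta> ax ay :: real
  assumes A1: "A1_at p q \<beta> ax ay 0" and "0 < \<beta>" "0 < p" "p < q" "0 \<le> ay"
  shows "\<beta> powr q * ax \<le> ay"
proof (rule tendsto_lowerbound)
  show "((\<lambda>t. ay + t powr (p - q)) \<longlongrightarrow> ay) at_top"
    using tendsto_add[OF tendsto_const tendsto_neg_powr[OF _ filterlim_ident]] \<open>p < q\<close> by simp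
  show "\<forall>\<^sub>F t in at_top. \<beta> powr q * ax \<le> ay + t powr (p - q)"
    using eventually_ge_at_top[of 1]
  proof eventually_elim
    case (elim t)
    have "1 \<le> t powr p" using elim \<open>0 < p\<close> by (intro ge_one_powr_ge_zero) auto
    then show ?case
      using elim assms by (intro A1_at_admissible_bound[OF A1]) (auto intro: add_increasing2)
  qed
qed simp

lemma A1_at_small_weight_bound:
  fixes p q \<beta> ax ay om :: real
  assumes A1: "A1_at p q \<beta> ax ay om" and "0 < \<beta>" "0 < p" "p < q" "0 \<le> ay"
    and om: "0 < om" "om \<le> 1 / 2"
  shows "\<beta> powr q * ax \<le> 2 * ay + (2 * om) powr ((q - p) / p)"
proof -
  define h where "h = 1 / (2 * om)"
  have "1 \<le> h" using om by (simp add: h_def field_simps)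
  have admissible: "\<beta> powr q * ax \<le> ay + t powr (p - q)"
    if "0 < t" "t powr p \<le> h" "ay * t powr q \<le> h" "h \<le> t powr p \<or> h \<le> ay * t powr q" for t
  proof (rule A1_at_admissible_bound[OF A1 \<open>0 < \<beta>\<close> \<open>0 < t\<close>])
    show "1 \<le> t powr p + ay * t powr q"
      using that \<open>1 \<le> h\<close> \<open>0 \<le> ay\<close> by (smt (verit) mult_nonneg_nonneg powr_ge_zero)
    have "(t powr p + ay * t powr q) * om \<le> (2 * h) * om"
      using that om by (intro mult_right_mono) auto
    then show "(t powr p + ay * t powr q) * om \<le> 1"
      using om by (simp add: h_def)
  qed
  define t0 where "t0 = h powr (1 / p)"
  have "0 < t0" "t0 powr p = h" using \<open>1 \<le> h\<close> \<open>0 < p\<close> by (auto simp: t0_def powr_powr)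
  show ?thesis
  proof (cases "ay * t0 powr q \<le> h")
    case True
    have "t0 powr (p - q) = (2 * om) powr ((q - p) / p)"
    proof -
      have "t0 powr (p - q) = h powr ((p - q) / p)" by (simp add: t0_def powr_powr)
      also have "\<dots> = (2 * om) powr (- ((p - q) / p))"
        using om by (simp add: h_def powr_divide powr_minus_divide)
      also have "\<dots> = (2 * om) powr ((q - p) / p)"
        by (simp add: minus_divide_left)
      finally show ?thesis .
    qed
    then show ?thesis
      using admissible[of t0] True \<open>0 < t0\<close> \<open>t0 powr p = h\<close> \<open>0 \<le> ay\<close> by simp
  next
    case False
    then have "0 < ay" using \<open>1 \<le> h\<close> \<open>0 \<le> ay\<close> by (cases "ay = 0") auto
    define t1 where "t1 = (h / ay) powr (1 / q)"
    have "0 < t1" "ay * t1 powr q = h"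
      using \<open>1 \<le> h\<close> \<open>0 < ay\<close> \<open>0 < p\<close> \<open>p < q\<close> by (auto simp: t1_def powr_powr)
    have "ay * t1 powr q < ay * t0 powr q" using False \<open>ay * t1 powr q = h\<close> by simp
    then have "t1 powr q < t0 powr q" using \<open>0 < ay\<close> mult_less_cancel_left_pos by blast
    then have "t1 < t0"
      using \<open>0 < p\<close> \<open>p < q\<close> \<open>0 < t1\<close> \<open>0 < t0\<close> powr_less_cancel2[of q t1 t0] by linarith
    then have "t1 powr p \<le> h"
      using powr_mono2[of p t1 t0] \<open>t0 powr p = h\<close> \<open>0 < p\<close> \<open>0 < t1\<close> by simp
    have "t1 powr (p - q) = t1 powr p / t1 powr q" by (rule powr_diff)
    also have "\<dots> \<le> ay"
      using \<open>t1 powr p \<le> h\<close> \<open>ay * t1 powr q = h\<close> \<open>0 < t1\<close> by (simp add: divide_le_eq)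
    finally show ?thesis
      using admissible[of t1] \<open>0 < t1\<close> \<open>t1 powr p \<le> h\<close> \<open>ay * t1 powr q = h\<close>
        powr_ge_zero[of "2 * om" "(q - p) / p"] by linarith
  qed
qed

lemma bound_if_A1_at:
  fixes p q \<beta> M ax ay om :: real
  assumes A1: "om \<le> 1 \<Longrightarrow> A1_at p q \<beta> ax ay om"
    and "0 < \<beta>" "0 < p" "p < q" "0 \<le> ax" "ax \<le> M" "0 \<le> ay" "0 \<le> om"
  shows "ax \<le> 2 powr ((q - p) / p) * (M + 2 / \<beta> powr q) * (ay + om powr ((q - p) / p))"
proof -
  define e where "e = (q - p) / p"
  define K where "K = M + 2 / \<beta> powr q"
  define C where "C = 2 powr e * K"
  have "0 < e" "0 < \<beta> powr q" "1 \<le> 2 powr e"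
    using assms by (auto simp: e_def intro: ge_one_powr_ge_zero)
  have "0 < 1 / \<beta> powr q" using \<open>0 < \<beta> powr q\<close> by simp
  moreover have "2 / \<beta> powr q = 2 * (1 / \<beta> powr q)" by simp
  ultimately have "M \<le> K" "2 / \<beta> powr q \<le> K" "1 / \<beta> powr q \<le> K"
    using assms(5,6) unfolding K_def by linarith+
  have "K \<le> C"
    using mult_right_mono[OF \<open>1 \<le> 2 powr e\<close>, of K] \<open>M \<le> K\<close> assms(5,6) by (simp add: C_def)
  have "2 powr e * M \<le> C" "2 powr e / \<beta> powr q \<le> C"
    using mult_left_mono[OF \<open>M \<le> K\<close>, of "2 powr e"]
      mult_left_mono[OF \<open>1 / \<beta> powr q \<le> K\<close>, of "2 powr e"] by (simp_all add: C_def)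
  have from_test: "ax \<le> C * (ay + om powr e)" if "\<beta> powr q * ax \<le> 2 * ay + (2 * om) powr e"
  proof -
    have "ax \<le> (2 * ay + 2 powr e * om powr e) / \<beta> powr q"
      using that \<open>0 < \<beta> powr q\<close> assms(8) by (simp add: powr_mult pos_le_divide_eq mult.commute)
    also have "\<dots> = 2 / \<beta> powr q * ay + 2 powr e / \<beta> powr q * om powr e"
      by (simp add: add_divide_distrib)
    also have "\<dots> \<le> C * ay + C * om powr e"
      using \<open>2 / \<beta> powr q \<le> K\<close> \<open>K \<le> C\<close> \<open>2 powr e / \<beta> powr q \<le> C\<close> assms(7)
      by (intro add_mono mult_right_mono) auto
    finally show ?thesis by (simp add: distrib_left)
  qed
  consider "om = 0" | "0 < om" "om \<le> 1 / 2" | "1 / 2 < om"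
    using assms(8) by linarith
  then have "ax \<le> C * (ay + om powr e)"
  proof cases
    case 1
    then have "\<beta> powr q * ax \<le> ay"
      using A1 assms by (intro A1_at_zero_weight_bound) auto
    then show ?thesis using 1 assms(7) by (intro from_test) simp
  next
    case 2
    then show ?thesis
      using A1 assms A1_at_small_weight_bound[of p q \<beta> ax ay om] by (intro from_test) (auto simp: e_def)
  next
    case 3
    have "1 \<le> (2 * om) powr e"
      using 3 \<open>0 < e\<close> by (intro ge_one_powr_ge_zero) auto
    then have "ax \<le> M * (2 * om) powr e"
      using assms(5,6) mult_left_mono[of 1 "(2 * om) powr e" M] by simp
    also have "\<dots> = 2 powr e * M * om powr e"
      using assms(8) by (simp add: powr_mult)
    also have "\<dots> \<le> C * (ay + om powr e)"
      using \<open>2 powr e * M \<le> C\<close> \<open>M \<le> K\<close> \<open>K \<le> C\<close> assms(5-7)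
      by (intro mult_mono) auto
    finally show ?thesis .
  qed
  then show ?thesis by (simp add: C_def K_def e_def)
qed

lemma bound_if_A1_weight_double_phase:
  fixes \<Omega> :: "'a::euclidean_space set" and w a :: "'a \<Rightarrow> real" and p q :: real
  assumes "is_weight w" "0 < p" "p < q"
    and "AE x in lebesgue. x \<in> \<Omega> \<longrightarrow> \<bar>a x\<bar> \<le> M"
    and "AE x in lebesgue. x \<in> \<Omega> \<longrightarrow> 0 \<le> a x"
    and "A1_weight w \<Omega> (double_phase p q a)"
  shows "\<exists>C. \<forall>c r. AE x in lebesgue. AE y in lebesgue.
           x \<in> ball c r \<inter> \<Omega> \<longrightarrow> y \<in> ball c r \<inter> \<Omega> \<longrightarrow>
           a x \<le> C * (a y + wmeas w (ball c r) powr ((q - p) / p))"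
proof -
  obtain \<beta> where "0 < \<beta>" and A1: "\<And>c r. wmeas w (ball c r) \<le> 1 \<Longrightarrow>
      AE x in lebesgue. AE y in lebesgue. x \<in> ball c r \<inter> \<Omega> \<longrightarrow> y \<in> ball c r \<inter> \<Omega> \<longrightarrow>
        A1_at p q \<beta> (a x) (a y) (wmeas w (ball c r))"
    using assms(6) unfolding A1_weight_double_phase_iff by blast
  from assms(4,5) have a_bounds: "AE x in lebesgue. x \<in> \<Omega> \<longrightarrow> 0 \<le> a x \<and> a x \<le> M"
    by eventually_elim auto
  have "AE x in lebesgue. AE y in lebesgue. x \<in> ball c r \<inter> \<Omega> \<longrightarrow> y \<in> ball c r \<inter> \<Omega> \<longrightarrow>
      a x \<le> 2 powr ((q - p) / p) * (M + 2 / \<beta> powr q) * (a y + wmeas w (ball c r) powr ((q - p) / p))"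
    for c r
  proof -
    have "AE x in lebesgue. AE y in lebesgue. x \<in> ball c r \<inter> \<Omega> \<longrightarrow> y \<in> ball c r \<inter> \<Omega> \<longrightarrow>
        (wmeas w (ball c r) \<le> 1 \<longrightarrow> A1_at p q \<beta> (a x) (a y) (wmeas w (ball c r)))"
      using A1[of c r] by (cases "wmeas w (ball c r) \<le> 1") auto
    then show ?thesis
      using a_bounds assms(5)
      by (rule AE_AE_mono)
        (use assms(2,3) \<open>0 < \<beta>\<close> wmeas_nonneg[OF assms(1)] in \<open>auto intro!: bound_if_A1_at\<close>)
  qed
  then show ?thesis by blast
qed

lemma A1_weight_double_phase_if_bound:
  fixes \<Omega> :: "'a::euclidean_space set" and w a :: "'a \<Rightarrow> real" and p q :: real
  assumes "is_weight w" "1 \<le> p" "p < q"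
    and "AE x in lebesgue. x \<in> \<Omega> \<longrightarrow> 0 \<le> a x"
    and bound: "\<And>c r. AE x in lebesgue. AE y in lebesgue.
           x \<in> ball c r \<inter> \<Omega> \<longrightarrow> y \<in> ball c r \<inter> \<Omega> \<longrightarrow>
           a x \<le> C0 * (a y + wmeas w (ball c r) powr ((q - p) / p))"
  shows "A1_weight w \<Omega> (double_phase p q a)"
proof -
  define C where "C = max C0 0"
  have "AE x in lebesgue. AE y in lebesgue. x \<in> ball c r \<inter> \<Omega> \<longrightarrow> y \<in> ball c r \<inter> \<Omega> \<longrightarrow>
      A1_at p q (1 / (2 * (C + 1))) (a x) (a y) (wmeas w (ball c r))" for c r
    using bound[of c r] assms(4) assms(4)
  proof (rule AE_AE_mono, intro impI)
    fix x y
    assume "x \<in> ball c r \<inter> \<Omega>" "y \<in> ball c r \<inter> \<Omega>"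
      and "x \<in> ball c r \<inter> \<Omega> \<longrightarrow> y \<in> ball c r \<inter> \<Omega> \<longrightarrow>
        a x \<le> C0 * (a y + wmeas w (ball c r) powr ((q - p) / p))"
      and "x \<in> \<Omega> \<longrightarrow> 0 \<le> a x" "y \<in> \<Omega> \<longrightarrow> 0 \<le> a y"
    moreover have "C0 * (a y + wmeas w (ball c r) powr ((q - p) / p))
        \<le> C * (a y + wmeas w (ball c r) powr ((q - p) / p))"
      using calculation by (intro mult_right_mono) (auto simp: C_def)
    ultimately show "A1_at p q (1 / (2 * (C + 1))) (a x) (a y) (wmeas w (ball c r))"
      using assms(2,3) wmeas_nonneg[OF assms(1)]
      by (intro A1_at_if_bound) (auto simp: C_def)
  qed
  moreover have "0 < 1 / (2 * (C + 1))" "1 / (2 * (C + 1)) \<le> 1"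
    by (auto simp: C_def field_simps)
  ultimately show ?thesis
    unfolding A1_weight_double_phase_iff by blast
qed

theorem lemma5p9:
  fixes \<Omega> :: "'a::euclidean_space set" and w a :: "'a \<Rightarrow> real" and p q :: real
  assumes "open \<Omega>"
    and "is_weight w"
    and "1 \<le> p" and "p < q"
    and "set_borel_measurable lebesgue \<Omega> a"
    and "\<exists>M. AE x in lebesgue. x \<in> \<Omega> \<longrightarrow> \<bar>a x\<bar> \<le> M"
    and "AE x in lebesgue. x \<in> \<Omega> \<longrightarrow> 0 \<le> a x"
  shows "A1_weight w \<Omega> (double_phase p q a) \<longleftrightarrow>
    (\<exists>C. \<forall>c r. AE x in lebesgue. AE y in lebesgue.
        x \<in> ball c r \<inter> \<Omega> \<longrightarrow> y \<in> ball c r \<inter> \<Omega> \<longrightarrow>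
        a x \<le> C * (a y + wmeas w (ball c r) powr ((q - p) / p)))"
proof -
  obtain M where "AE x in lebesgue. x \<in> \<Omega> \<longrightarrow> \<bar>a x\<bar> \<le> M" using assms(6) by blast
  moreover have "0 < p" using assms(3) by simp
  ultimately show ?thesis
    using bound_if_A1_weight_double_phase[of w p q \<Omega> a M] A1_weight_double_phase_if_bound[of w p q \<Omega> a]
      assms(2-4,7) by blast
qed

end
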